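(* Let $\mathrm r\in\mathbb{Z}_+^d$ with $\mathrm r>0$, let $x\in S_d^{\mathrm r}$ with finite length, and let $\bar x$ be the associated sequence (which lies in $\bar S_d^{\mathrm r}$). Then the number of good cyclical permutations of $x$ (with respect to $\mathrm r$) equals the number of good cyclical permutations of $\bar x$ (with respect to $\mathrm r$).
   Context: $d\ge2$, $[d]=\{1,\dots,d\}$, $\mathbb N=\{1,2,\dots\}$, $1_d=(1,\dots,1)$. $S_d$: families $x=(x^{(1)},\dots,x^{(d)})$, $x^{(i)}=(x^{i,1},\dots,x^{i,d})$ a $\mathbb{Z}^d$-valued sequence indexed by $\{0,\dots,n_i\}$, $x^{(i)}_0=0$, $x^{i,j}$ nondecreasing for $i\ne j$, $x^{i,i}_{n+1}-x^{i,i}_n\ge-1$; $(n_1,\dots,n_d)$ is its length; $x^{i,j}(n)=x^{i,j}_n$. A solution of $(\mathrm r,x)$ is $\mathrm s\in\mathbb{Z}_+^d$, $\mathrm s\le$ length, with $r_j+\sum_ix^{i,j}(s_i)=0$ for all $j$; the smallest solution is a solution that is coordinatewise $\le$ every solution. $S_d^{\mathrm r}$: $x\in S_d$ whose length lies in $\mathbb{N}^d$ and is the smallest solution of $(\mathrm r,x)$; $\bar S_d^{\mathrm r}$: those $x\in S_d^{\mathrm r}$ with $x^{i,i}_k=-k$ for all $k,i$. For $x\in S_d$ set $k_i=-\min_{0\le n\le n_i}x^{i,i}_n$, $\tau^{(i)}_k=\min\{n\ge0:x^{i,i}_n=-k\}$ ($0\le k\le k_i$) and $\bar x^{i,j}_k=x^{i,j}(\tau^{(i)}_k)$,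 $0\le k\le k_i$. Cyclical permutations: for $g$ on $\{0,\dots,m\}$ with $g(0)=0$, $1\le n\le m$, $0\le q\le n-1$: $g_{q,n}(h)=g(q+h)-g(q)$ for $0\le h\le n-q$, $g_{q,n}(h)=g(h-(n-q))+g(n)-g(q)$ for $n-q\le h\le n$, $g_{q,n}(h)=g(h)$ for $h\ge n$; for $y\in S_d$ of length $\mathrm m\in\mathbb N^d$ and $\mathrm q\le\mathrm m-1_d$, $y_{\mathrm q,\mathrm m}=(y^{(1)}_{q_1,m_1},\dots,y^{(d)}_{q_d,m_d})$. If $\mathrm m$ is a solution of $(\mathrm r,y)$, $y_{\mathrm q,\mathrm m}$ is a good cyclical permutation of $y$ (with respect to $\mathrm r$) if $\mathrm m$ is the smallest solution of $(\mathrm r,y_{\mathrm q,\mathrm m})$; the number of good cyclical permutations is the number of such $\mathrm q$. *)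

theory Defs
  imports Main "HOL-Library.FuncSet"
begin

text \<open>A family x = (x^(1),...,x^(d)) is encoded as x i j n = x^{i,j}_n
  (i, j in {1..d}); its length is len :: nat => nat (len i = n_i).
  Values outside the relevant index ranges are irrelevant.\<close>

definition in_S :: "nat \<Rightarrow> (nat \<Rightarrow> nat \<Rightarrow> nat \<Rightarrow> int) \<Rightarrow> (nat \<Rightarrow> nat) \<Rightarrow> bool" where
  "in_S d x len \<longleftrightarrow>
     (\<forall>i\<in>{1..d}. \<forall>j\<in>{1..d}. x i j 0 = 0) \<and>
     (\<forall>i\<in>{1..d}. \<forall>j\<in>{1..d}. i \<noteq> j \<longrightarrow> (\<forall>n<len i. x i j n \<le> x i j (Suc n))) \<and>
     (\<forall>i\<in>{1..d}. \<forall>n<len i. x i i (Suc n) - x i i n \<ge> -1)"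

definition is_solution :: "nat \<Rightarrow> (nat \<Rightarrow> nat) \<Rightarrow> (nat \<Rightarrow> nat \<Rightarrow> nat \<Rightarrow> int) \<Rightarrow> (nat \<Rightarrow> nat)
    \<Rightarrow> (nat \<Rightarrow> nat) \<Rightarrow> bool" where
  "is_solution d r x len s \<longleftrightarrow>
     (\<forall>i\<in>{1..d}. s i \<le> len i) \<and>
     (\<forall>j\<in>{1..d}. int (r j) + (\<Sum>i\<in>{1..d}. x i j (s i)) = 0)"

definition is_smallest_solution :: "nat \<Rightarrow> (nat \<Rightarrow> nat) \<Rightarrow> (nat \<Rightarrow> nat \<Rightarrow> nat \<Rightarrow> int)
    \<Rightarrow> (nat \<Rightarrow> nat) \<Rightarrow> (nat \<Rightarrow> nat) \<Rightarrow> bool" where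
  "is_smallest_solution d r x len s \<longleftrightarrow>
     is_solution d r x len s \<and>
     (\<forall>s'. is_solution d r x len s' \<longrightarrow> (\<forall>i\<in>{1..d}. s i \<le> s' i))"

definition in_S_r :: "nat \<Rightarrow> (nat \<Rightarrow> nat) \<Rightarrow> (nat \<Rightarrow> nat \<Rightarrow> nat \<Rightarrow> int) \<Rightarrow> (nat \<Rightarrow> nat) \<Rightarrow> bool" where
  "in_S_r d r x len \<longleftrightarrow>
     in_S d x len \<and> (\<forall>i\<in>{1..d}. 1 \<le> len i) \<and> is_smallest_solution d r x len len"

definition bar_len :: "(nat \<Rightarrow> nat \<Rightarrow> nat \<Rightarrow> int) \<Rightarrow> (nat \<Rightarrow> nat) \<Rightarrow> nat \<Rightarrow> nat" where
  "bar_len x len i = nat (- Min ((\<lambda>n. x i i n) ` {0..len i}))"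

definition tau :: "(nat \<Rightarrow> nat \<Rightarrow> nat \<Rightarrow> int) \<Rightarrow> nat \<Rightarrow> nat \<Rightarrow> nat" where
  "tau x i k = (LEAST n. x i i n = - int k)"

definition bar_seq :: "(nat \<Rightarrow> nat \<Rightarrow> nat \<Rightarrow> int) \<Rightarrow> nat \<Rightarrow> nat \<Rightarrow> nat \<Rightarrow> int" where
  "bar_seq x i j k = x i j (tau x i k)"

definition cyc :: "(nat \<Rightarrow> int) \<Rightarrow> nat \<Rightarrow> nat \<Rightarrow> nat \<Rightarrow> int" where
  "cyc g q n h =
     (if h \<le> n - q then g (q + h) - g q
      else if h \<le> n then g (h - (n - q)) + g n - g q
      else g h)"

definition cyc_perm :: "(nat \<Rightarrow> nat \<Rightarrow> nat \<Rightarrow> int) \<Rightarrow> (nat \<Rightarrow> nat) \<Rightarrow> (nat \<Rightarrow> nat)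
    \<Rightarrow> nat \<Rightarrow> nat \<Rightarrow> nat \<Rightarrow> int" where
  "cyc_perm y q m i j = cyc (y i j) (q i) (m i)"

definition num_good :: "nat \<Rightarrow> (nat \<Rightarrow> nat) \<Rightarrow> (nat \<Rightarrow> nat \<Rightarrow> nat \<Rightarrow> int) \<Rightarrow> (nat \<Rightarrow> nat) \<Rightarrow> nat" where
  "num_good d r y m =
     card {q \<in> Pi\<^sub>E {1..d} (\<lambda>i. {0..<m i}).
             is_smallest_solution d r (cyc_perm y q m) m m}"

end

theory Submission
  imports Defs
begin

text \<open>Each diagonal walk \<open>x\<^sup>i\<^sup>,\<^sup>i\<close> has steps \<open>\<ge> -1\<close> and, because \<open>n\<close> is the smallest
  solution, stays strictly above its final value \<open>-k\<^sub>i\<close> before time \<open>n\<^sub>i\<close>; so its ladder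
  times \<open>0 = \<tau>\<^sub>0 < \<dots> < \<tau>\<^sub>k\<^sub>i = n\<^sub>i\<close> are well defined, and \<open>x\<close> bar is \<open>x\<close> sampled at them.
  A good cyclical permutation of \<open>x\<close> must shift every coordinate at a ladder time \<open>\<tau>\<^sub>p\<^sub>i\<close>,
  since otherwise the permuted diagonal would reach its final value before \<open>n\<^sub>i\<close>. After
  shifting at \<open>\<tau>\<^sub>p\<close>, sampling the permuted \<open>x\<close> at the ladder times of its diagonal gives
  exactly the permuted \<open>x\<close> bar. So solutions of the permuted \<open>x\<close> bar give solutions of the
  permuted \<open>x\<close>, and conversely a solution of the permuted \<open>x\<close> dominates a point of the
  permuted \<open>x\<close> bar below which a greedy argument finds a solution. Hence
  \<open>p \<mapsto> (\<tau>\<^sub>p\<^sub>i)\<^sub>i\<close> is a bijection between the good shifts of \<open>x\<close> bar and those of \<open>x\<close>.\<close>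

lemma steps_mono_le:
  fixes g :: "nat \<Rightarrow> 'a::preorder"
  assumes "\<forall>a<n. g a \<le> g (Suc a)" "a \<le> b" "b \<le> n"
  shows "g a \<le> g b"
  using assms(2,3)
proof (induction b rule: dec_induct)
  case (step m)
  then show ?case using assms(1) by (meson Suc_leD Suc_le_lessD order_trans)
qed simp

section \<open>Solutions below a supersolution\<close>

definition residual :: "nat \<Rightarrow> (nat \<Rightarrow> nat) \<Rightarrow> (nat \<Rightarrow> nat \<Rightarrow> nat \<Rightarrow> int) \<Rightarrow> (nat \<Rightarrow> nat) \<Rightarrow> nat \<Rightarrow> int"
  where "residual d r z s j = int (r j) + (\<Sum>i\<in>{1..d}. z i j (s i))"

lemma is_solution_iff:
  "is_solution d r z m s \<longleftrightarrow> (\<forall>i\<in>{1..d}. s i \<le> m i) \<and> (\<forall>j\<in>{1..d}. residual d r z s j = 0)"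
  unfolding is_solution_def residual_def ..

lemma residual_fun_upd:
  assumes "i \<in> {1..d}"
  shows "residual d r z (s(i := v)) j = residual d r z s j - z i j (s i) + z i j v"
proof -
  have "(\<Sum>a\<in>{1..d}. z a j ((s(i := v)) a)) = z i j v + (\<Sum>a\<in>{1..d}-{i}. z a j (s a))"
    using assms by (simp add: sum.remove)
  moreover have "(\<Sum>a\<in>{1..d}. z a j (s a)) = z i j (s i) + (\<Sum>a\<in>{1..d}-{i}. z a j (s a))"
    using assms by (simp add: sum.remove)
  ultimately show ?thesis unfolding residual_def by simp
qed

lemma in_S_zero: "in_S d z m \<Longrightarrow> i \<in> {1..d} \<Longrightarrow> j \<in> {1..d} \<Longrightarrow> z i j 0 = 0"
  unfolding in_S_def by blast

lemma in_S_diag_step: "in_S d z m \<Longrightarrow> i \<in> {1..d} \<Longrightarrow> \<forall>a<m i. z i i (Suc a) - z i i a \<ge> -1"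
  unfolding in_S_def by blast

lemma in_S_offdiag_mono:
  assumes "in_S d z m" "i \<in> {1..d}" "j \<in> {1..d}" "i \<noteq> j" "a \<le> b" "b \<le> m i"
  shows "z i j a \<le> z i j b"
  using assms steps_mono_le[of "m i" "z i j" a b] unfolding in_S_def by blast

lemma residual_at_zero:
  "in_S d z m \<Longrightarrow> j \<in> {1..d} \<Longrightarrow> residual d r z (\<lambda>_. 0) j = int (r j)"
  unfolding residual_def by (simp add: in_S_zero)

lemma residual_mono_fix_diag:
  assumes S: "in_S d z m" and j: "j \<in> {1..d}" and st: "\<forall>i\<in>{1..d}. s i \<le> t i"
    and tm: "\<forall>i\<in>{1..d}. t i \<le> m i" and eq: "s j = t j"
  shows "residual d r z s j \<le> residual d r z t j"
  unfolding residual_def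
proof (intro add_left_mono sum_mono)
  fix i assume i: "i \<in> {1..d}"
  show "z i j (s i) \<le> z i j (t i)"
    using eq in_S_offdiag_mono[OF S i j] st tm i by (cases "i = j") auto
qed

lemma residual_raise:
  assumes S: "in_S d z m" and tm: "\<forall>i\<in>{1..d}. t i \<le> m i"
    and tv: "\<forall>j\<in>{1..d}. residual d r z t j \<le> 0"
    and st: "\<forall>i\<in>{1..d}. s i \<le> t i" and sv: "\<forall>j\<in>{1..d}. 0 \<le> residual d r z s j"
    and j: "j \<in> {1..d}" and pos: "0 < residual d r z s j"
  shows "s j < t j" and "\<forall>j'\<in>{1..d}. 0 \<le> residual d r z (s(j := Suc (s j))) j'"
proof -
  show sj: "s j < t j"
  proof (rule ccontr)
    assume "\<not> s j < t j"
    then have "s j = t j" using st j by (simp add: not_less le_antisym)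
    then show False using residual_mono_fix_diag[OF S j st tm, of r] tv pos j by force
  qed
  show "\<forall>j'\<in>{1..d}. 0 \<le> residual d r z (s(j := Suc (s j))) j'"
  proof
    fix j' assume j': "j' \<in> {1..d}"
    have "z j j' (Suc (s j)) - z j j' (s j) \<ge> (if j' = j then -1 else 0)"
      using in_S_diag_step[OF S j] in_S_offdiag_mono[OF S j j'] sj tm j by fastforce
    then show "0 \<le> residual d r z (s(j := Suc (s j))) j'"
      using residual_fun_upd[OF j, of r z s "Suc (s j)" j'] pos sv[rule_format, OF j'] by (cases "j' = j") auto
  qed
qed

text \<open>Greedy argument: start at \<open>0\<close>, where the residuals are the nonnegative \<open>r j\<close>, and
  keep raising a coordinate \<open>j\<close> with positive residual. This lowers only the \<open>j\<close>-th
  residual, and by at most 1; and \<open>j\<close> is still below \<open>t\<close> because the residuals at \<open>t\<close>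
  are nonpositive.\<close>
lemma solution_below:
  assumes S: "in_S d z m" and tm: "\<forall>i\<in>{1..d}. t i \<le> m i"
    and tv: "\<forall>j\<in>{1..d}. residual d r z t j \<le> 0"
  shows "\<exists>s. is_solution d r z m s \<and> (\<forall>i\<in>{1..d}. s i \<le> t i)"
proof -
  have "\<exists>s'. is_solution d r z m s' \<and> (\<forall>i\<in>{1..d}. s' i \<le> t i)"
    if "\<forall>i\<in>{1..d}. s i \<le> t i" "\<forall>j\<in>{1..d}. 0 \<le> residual d r z s j" for s
    using that
  proof (induction "\<Sum>i\<in>{1..d}. t i - s i" arbitrary: s rule: less_induct)
    case (less s)
    show ?case
    proof (cases "\<forall>j\<in>{1..d}. residual d r z s j = 0")
      case True
      then show ?thesis using less.prems tm unfolding is_solution_iff by (blast intro: order_trans)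
    next
      case False
      then obtain j where j: "j \<in> {1..d}" and pos: "0 < residual d r z s j"
        using less.prems(2) by (fastforce simp: less_le)
      note raise = residual_raise[OF S tm tv less.prems j pos]
      let ?s' = "s(j := Suc (s j))"
      have "(\<Sum>i\<in>{1..d}. t i - ?s' i) < (\<Sum>i\<in>{1..d}. t i - s i)"
        by (rule sum_strict_mono_ex1) (use j raise in auto)
      moreover have "\<forall>i\<in>{1..d}. ?s' i \<le> t i" using less.prems raise by auto
      ultimately show ?thesis using less.hyps raise by blast
    qed
  qed
  then show ?thesis using residual_at_zero[OF S] by force
qed

lemma smallest_solution_diag_above_end:
  assumes S: "in_S d z m" and sm: "is_smallest_solution d r z m m"
    and i: "i \<in> {1..d}" and h: "h < m i"
  shows "z i i (m i) < z i i h"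
proof (rule ccontr)
  assume not_above: "\<not> ?thesis"
  define t where "t = m(i := h)"
  have tm: "\<forall>i'\<in>{1..d}. t i' \<le> m i'" unfolding t_def using h by auto
  have "\<forall>j\<in>{1..d}. residual d r z t j \<le> 0"
  proof
    fix j assume j: "j \<in> {1..d}"
    have "z i j h \<le> z i j (m i)"
      using not_above in_S_offdiag_mono[OF S i j] h by (cases "i = j") auto
    then show "residual d r z t j \<le> 0"
      using sm j residual_fun_upd[OF i, of r z m h j]
      unfolding t_def is_smallest_solution_def is_solution_iff by force
  qed
  then obtain s where s: "is_solution d r z m s" "\<forall>i\<in>{1..d}. s i \<le> t i"
    using solution_below[OF S tm] by blast
  then have "m i \<le> s i" using sm i unfolding is_smallest_solution_def by blast
  moreover have "s i \<le> h" using s(2) i unfolding t_def by force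
  ultimately show False using h by simp
qed

section \<open>Cyclical permutations\<close>

lemma cyc_0: "cyc g q n 0 = 0"
  unfolding cyc_def by simp

lemma cyc_end:
  assumes "g 0 = 0" "q \<le> n"
  shows "cyc g q n n = g n"
  using assms unfolding cyc_def by (cases "q = 0") auto

lemma cyc_step_ge:
  fixes g :: "nat \<Rightarrow> int"
  assumes g0: "g 0 = 0" and q: "q \<le> n" and steps: "\<forall>a<n. c \<le> g (Suc a) - g a" and h: "h < n"
  shows "c \<le> cyc g q n (Suc h) - cyc g q n h"
proof -
  consider "Suc h \<le> n - q" | "h = n - q" | "n - q < h" by linarith
  then show ?thesis
  proof cases
    case 1
    then show ?thesis unfolding cyc_def using steps h by (simp add: add.commute)
  next
    case 2
    then have "cyc g q n (Suc h) = g 1 + g n - g q" "cyc g q n h = g n - g q"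
      unfolding cyc_def using h q by (auto simp: Suc_diff_le)
    moreover have "c \<le> g 1 - g 0" using steps h by force
    ultimately show ?thesis using g0 by simp
  next
    case 3
    then have "Suc h - (n - q) = Suc (h - (n - q))" "h - (n - q) < n"
      using h by (auto simp: Suc_diff_le)
    then show ?thesis unfolding cyc_def using 3 h steps by simp
  qed
qed

lemma in_S_cyc_perm:
  assumes S: "in_S d x m" and q: "\<forall>i\<in>{1..d}. q i \<le> m i"
  shows "in_S d (cyc_perm x q m) m"
  unfolding in_S_def cyc_perm_def
proof (intro conjI ballI allI impI)
  fix i j assume "i \<in> {1..d}" "j \<in> {1..d}"
  show "cyc (x i j) (q i) (m i) 0 = 0" by (rule cyc_0)
next
  fix i j h assume i: "i \<in> {1..d}" and j: "j \<in> {1..d}" and "i \<noteq> j" and h: "h < m i"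
  then have "\<forall>a<m i. 0 \<le> x i j (Suc a) - x i j a" using S unfolding in_S_def by force
  then show "cyc (x i j) (q i) (m i) h \<le> cyc (x i j) (q i) (m i) (Suc h)"
    using cyc_step_ge[of "x i j" "q i" "m i" 0 h] in_S_zero[OF S i j] q i h by simp
next
  fix i h assume i: "i \<in> {1..d}" and h: "h < m i"
  show "-1 \<le> cyc (x i i) (q i) (m i) (Suc h) - cyc (x i i) (q i) (m i) h"
    using cyc_step_ge[of "x i i" "q i" "m i" "-1" h] in_S_zero[OF S i i] in_S_diag_step[OF S i] q i h
    by blast
qed

lemma cyc_perm_end:
  "in_S d x m \<Longrightarrow> i \<in> {1..d} \<Longrightarrow> j \<in> {1..d} \<Longrightarrow> q i \<le> m i \<Longrightarrow> cyc_perm x q m i j (m i) = x i j (m i)"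
  unfolding cyc_perm_def by (simp add: cyc_end in_S_zero)

lemma is_solution_cyc_perm:
  assumes S: "in_S d x m" and q: "\<forall>i\<in>{1..d}. q i \<le> m i" and sol: "is_solution d r x m m"
  shows "is_solution d r (cyc_perm x q m) m m"
proof -
  have "cyc_perm x q m i j (m i) = x i j (m i)" if "i \<in> {1..d}" "j \<in> {1..d}" for i j
    using cyc_perm_end[OF S that] q that by simp
  then show ?thesis using sol unfolding is_solution_def by simp
qed

section \<open>Ladder times of a walk with steps at least \<open>-1\<close>\<close>

lemma skip_free_hits_level:
  fixes g :: "nat \<Rightarrow> int"
  assumes steps: "\<forall>a<n. g (Suc a) - g a \<ge> -1" and "v \<le> g 0" "g h \<le> v" "h \<le> n"
  shows "\<exists>h'\<le>h. g h' = v"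
  using assms(3,4)
proof (induction h)
  case 0
  then show ?case using \<open>v \<le> g 0\<close> by auto
next
  case (Suc h)
  show ?case
  proof (cases "g h \<le> v")
    case True
    then show ?thesis using Suc by (metis le_SucI Suc_leD)
  next
    case False
    moreover have "g (Suc h) - g h \<ge> -1" using steps Suc by simp
    ultimately have "g (Suc h) = v" using Suc by linarith
    then show ?thesis by auto
  qed
qed

text \<open>Models a diagonal walk \<open>x\<^sup>i\<^sup>,\<^sup>i\<close> up to the smallest solution; \<open>depth\<close> and
  \<open>ladder\<close> are \<open>k\<^sub>i\<close> and \<open>\<tau>\<^sup>(\<^sup>i\<^sup>)\<close>.\<close>
locale descent_walk =
  fixes f :: "nat \<Rightarrow> int" and N :: nat
  assumes f_0: "f 0 = 0" and steps: "\<forall>a<N. -1 \<le> f (Suc a) - f a"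
    and above_end: "\<forall>h<N. f N < f h"
begin

definition depth :: nat where "depth = nat (- f N)"

definition ladder :: "nat \<Rightarrow> nat" where "ladder k = (LEAST h. f h = - int k)"

lemma f_end: "f N = - int depth"
  using f_0 above_end unfolding depth_def by (cases "N = 0") auto

lemma depth_le: "h \<le> N \<Longrightarrow> - int depth \<le> f h"
  using above_end f_end by (cases "h = N") (auto intro: less_imp_le)

lemma Min_image_eq_end: "Min (f ` {0..N}) = f N"
proof (rule Min_eqI)
  show "f N \<in> f ` {0..N}" by simp
qed (use depth_le f_end in auto)

lemma
  assumes k: "k \<le> depth"
  shows ladder_le: "ladder k \<le> N"
    and f_ladder: "f (ladder k) = - int k"
    and above_before_ladder: "\<forall>h<ladder k. - int k < f h"
proof -
  obtain h where h: "h \<le> N" "f h = - int k"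
    using skip_free_hits_level[OF steps, of "- int k" N] f_0 f_end k by auto
  show "f (ladder k) = - int k" unfolding ladder_def by (rule LeastI[of _ h]) (rule h(2))
  have "ladder k \<le> h" unfolding ladder_def by (rule Least_le) (rule h(2))
  then show "ladder k \<le> N" using h(1) by simp
  show "\<forall>h'<ladder k. - int k < f h'"
  proof (intro allI impI, rule ccontr)
    fix h' assume h': "h' < ladder k" "\<not> - int k < f h'"
    then obtain h'' where "h'' \<le> h'" "f h'' = - int k"
      using skip_free_hits_level[OF steps, of "- int k" h'] f_0 \<open>ladder k \<le> h\<close> h(1) by force
    then show False using h'(1) Least_le[of "\<lambda>h. f h = - int k" h''] unfolding ladder_def by simp
  qed
qed

lemma ladder_eqI:
  assumes "f h = - int k" "\<forall>h'<h. f h < f h'"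
  shows "ladder k = h"
  unfolding ladder_def
  by (rule Least_equality) (use assms in \<open>auto simp: not_le[symmetric]\<close>)

lemma ladder_depth: "ladder depth = N"
  using ladder_eqI f_end above_end by simp

lemma ladder_0: "ladder 0 = 0"
  using ladder_eqI[of 0 0] f_0 by simp

lemma ladder_strict_mono:
  assumes "k < k'" "k' \<le> depth"
  shows "ladder k < ladder k'"
proof -
  have "ladder k \<noteq> ladder k'" using f_ladder[of k] f_ladder[of k'] assms by auto
  moreover have "\<not> ladder k' < ladder k"
    using above_before_ladder[of k] f_ladder[of k'] assms by force
  ultimately show ?thesis by simp
qed

lemma ladder_mono: "k \<le> k' \<Longrightarrow> k' \<le> depth \<Longrightarrow> ladder k \<le> ladder k'"
  using ladder_strict_mono[of k k'] by (cases "k = k'") auto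

end

text \<open>Cyclically shifting the walk at the ladder time \<open>shift = ladder p\<close> yields again a
  descent walk, whose ladder times are \<open>shifted_ladder\<close> (see \<open>cyc_at_shifted_ladder\<close> and
  \<open>cyc_before_shifted_ladder\<close>): the levels \<open>p+1, \<dots>, depth\<close> are reached first, then
  the levels \<open>1, \<dots>, p\<close> in the wrapped-around initial segment.\<close>
locale shifted_walk = descent_walk +
  fixes p :: nat
  assumes p_less_depth: "p < depth"
begin

definition shift :: nat where "shift = ladder p"

definition shifted_ladder :: "nat \<Rightarrow> nat" where
  "shifted_ladder k =
     (if k \<le> depth - p then ladder (p + k) - shift else N - shift + ladder (k - (depth - p)))"

lemma shift_less: "shift < N"
  using ladder_strict_mono[of p depth] p_less_depth ladder_depth unfolding shift_def by simp

lemma f_shift: "f shift = - int p"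
  using f_ladder p_less_depth unfolding shift_def by simp

lemma shifted_ladder_0: "shifted_ladder 0 = 0"
  unfolding shifted_ladder_def shift_def by simp

lemma shifted_ladder_unwrapped:
  assumes "k \<le> depth - p"
  shows "shift \<le> ladder (p + k)" "ladder (p + k) \<le> N" "shifted_ladder k = ladder (p + k) - shift"
  using ladder_mono[of p "p + k"] ladder_le[of "p + k"] p_less_depth assms
  unfolding shift_def shifted_ladder_def by auto

lemma shifted_ladder_wrapped:
  assumes "depth - p < k" "k \<le> depth"
  shows "0 < ladder (k - (depth - p))" "ladder (k - (depth - p)) \<le> shift"
    "shifted_ladder k = N - shift + ladder (k - (depth - p))"
  using ladder_strict_mono[of 0 "k - (depth - p)"] ladder_0 ladder_mono[of "k - (depth - p)" p]
    p_less_depth assms unfolding shift_def shifted_ladder_def by auto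

lemma shifted_ladder_depth: "shifted_ladder depth = N"
proof (cases "p = 0")
  case True
  then show ?thesis using shifted_ladder_unwrapped[of depth] ladder_depth ladder_0
    unfolding shift_def by simp
next
  case False
  then show ?thesis using shifted_ladder_wrapped[of depth] p_less_depth shift_less
    unfolding shift_def by simp
qed

lemma shifted_ladder_le: "k \<le> depth \<Longrightarrow> shifted_ladder k \<le> N"
proof (cases "k \<le> depth - p")
  case True
  then show ?thesis using shifted_ladder_unwrapped[OF True] by linarith
next
  case False
  assume k: "k \<le> depth"
  have "shifted_ladder k = N - shift + ladder (k - (depth - p))" "ladder (k - (depth - p)) \<le> shift"
    using shifted_ladder_wrapped[of k] False k by simp_all
  then show ?thesis using shift_less by linarith
qed

lemma shifted_ladder_less:
  assumes k: "k < depth"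
  shows "shifted_ladder k < N"
proof (cases "k \<le> depth - p")
  case True
  have "ladder (p + k) < N \<or> 0 < shift"
  proof (cases "p = 0")
    case True
    then show ?thesis using ladder_strict_mono[of k depth] ladder_depth k by simp
  next
    case False
    then show ?thesis
      using ladder_strict_mono[of 0 p] ladder_0 p_less_depth unfolding shift_def by simp
  qed
  then show ?thesis using shifted_ladder_unwrapped[OF True] by linarith
next
  case False
  then have "ladder (k - (depth - p)) < shift"
    using ladder_strict_mono p_less_depth k unfolding shift_def by simp
  moreover have "shifted_ladder k = N - shift + ladder (k - (depth - p))"
    using shifted_ladder_wrapped[of k] False k by simp
  ultimately show ?thesis using shift_less by linarith
qed

lemma cyc_shifted_ladder:
  assumes k: "k \<le> depth"
  shows "cyc g shift N (shifted_ladder k) = cyc (\<lambda>k. g (ladder k)) p depth k"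
proof (cases "k \<le> depth - p")
  case True
  note unwrapped = shifted_ladder_unwrapped[OF True]
  have "ladder (p + k) - shift \<le> N - shift" using unwrapped by linarith
  then have "cyc g shift N (shifted_ladder k) = g (ladder (p + k)) - g shift"
    unfolding cyc_def using unwrapped by simp
  then show ?thesis unfolding cyc_def shift_def using True by simp
next
  case False
  then have "0 < ladder (k - (depth - p))" "ladder (k - (depth - p)) \<le> shift"
    "shifted_ladder k = N - shift + ladder (k - (depth - p))"
    using shifted_ladder_wrapped[of k] k by (simp_all add: not_le)
  then have "\<not> shifted_ladder k \<le> N - shift" "shifted_ladder k \<le> N"
    "shifted_ladder k - (N - shift) = ladder (k - (depth - p))"
    using shift_less by linarith+
  then have "cyc g shift N (shifted_ladder k) = g (ladder (k - (depth - p))) + g N - g shift"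
    unfolding cyc_def by simp
  then show ?thesis unfolding cyc_def using False k ladder_depth shift_def by simp
qed

lemma cyc_at_shifted_ladder:
  assumes "k \<le> depth"
  shows "cyc f shift N (shifted_ladder k) = - int k"
proof -
  have "cyc f shift N (shifted_ladder k) = cyc (\<lambda>k. f (ladder k)) p depth k"
    by (rule cyc_shifted_ladder[OF assms])
  also have "\<dots> = - int k" using assms f_ladder p_less_depth unfolding cyc_def by auto
  finally show ?thesis .
qed

lemma f_before_shift: "h \<le> shift \<Longrightarrow> - int p \<le> f h"
  using above_before_ladder[of p] f_shift p_less_depth unfolding shift_def
  by (cases "h = ladder p") (auto intro: less_imp_le)

lemma cyc_shift_ge_depth:
  assumes h: "h \<le> N"
  shows "- int depth \<le> cyc f shift N h"
proof (cases "h \<le> N - shift")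
  case True
  then have "shift + h \<le> N" using shift_less by simp
  then show ?thesis unfolding cyc_def using True depth_le[of "shift + h"] f_shift by simp
next
  case False
  then have "- int p \<le> f (h - (N - shift))" using f_before_shift h by simp
  then show ?thesis unfolding cyc_def using False h f_shift f_end by simp
qed

lemma cyc_before_shifted_ladder:
  assumes k: "k \<le> depth" and h: "h < shifted_ladder k"
  shows "- int k < cyc f shift N h"
proof (cases "k \<le> depth - p")
  case True
  note unwrapped = shifted_ladder_unwrapped[OF True]
  then have "shift + h < ladder (p + k)" "h \<le> N - shift" using h by auto
  moreover have "p + k \<le> depth" using True p_less_depth by simp
  ultimately show ?thesis
    unfolding cyc_def using above_before_ladder[of "p + k"] f_shift by auto
next
  case False
  then have wrapped: "ladder (k - (depth - p)) \<le> shift"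
    "shifted_ladder k = N - shift + ladder (k - (depth - p))"
    using shifted_ladder_wrapped[of k] k by (simp_all add: not_le)
  show ?thesis
  proof (cases "h \<le> N - shift")
    case True
    then have "shift + h \<le> N" using shift_less by simp
    then show ?thesis
      unfolding cyc_def using True depth_le[of "shift + h"] f_shift False by simp
  next
    case hF: False
    then have "h - (N - shift) < ladder (k - (depth - p))" "h \<le> N"
      using h wrapped shift_less by linarith+
    then have "- int (k - (depth - p)) < f (h - (N - shift))"
      using above_before_ladder[of "k - (depth - p)"] k by simp
    moreover have "int (k - (depth - p)) = int k + int p - int depth"
      using False p_less_depth by simp
    ultimately show ?thesis
      unfolding cyc_def using hF \<open>h \<le> N\<close> f_shift f_end by simp
  qed
qed

lemma shifted_ladder_below:
  assumes h: "h \<le> N"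
  shows "\<exists>k\<le>depth. shifted_ladder k \<le> h \<and> - int k \<le> cyc f shift N h"
proof -
  define A where "A = {k\<in>{0..depth}. shifted_ladder k \<le> h}"
  have A: "finite A" "0 \<in> A" unfolding A_def using shifted_ladder_0 by auto
  define k where "k = Max A"
  have "k \<in> A" unfolding k_def using Max_in[OF A(1)] A(2) by blast
  then have k: "k \<le> depth" "shifted_ladder k \<le> h" unfolding A_def by auto
  show ?thesis
  proof (cases "k = depth")
    case True
    then show ?thesis using k cyc_shift_ge_depth h by auto
  next
    case False
    then have Suc_k: "Suc k \<le> depth" using k by simp
    moreover have "Suc k \<notin> A" using Max_ge[OF A(1), of "Suc k"] unfolding k_def by auto
    ultimately have "h < shifted_ladder (Suc k)" unfolding A_def by auto
    then have "- int (Suc k) < cyc f shift N h" by (rule cyc_before_shifted_ladder[OF Suc_k])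
    then have "- int k \<le> cyc f shift N h" by simp
    then show ?thesis using k by blast
  qed
qed

end

section \<open>Good shifts of \<open>x\<close> and of \<open>x\<close> bar\<close>

locale S_r_family =
  fixes d :: nat and r :: "nat \<Rightarrow> nat" and x :: "nat \<Rightarrow> nat \<Rightarrow> nat \<Rightarrow> int" and n :: "nat \<Rightarrow> nat"
  assumes in_S_r: "in_S_r d r x n"
begin

lemma in_S: "in_S d x n"
  using in_S_r unfolding in_S_r_def by simp

lemma smallest: "is_smallest_solution d r x n n"
  using in_S_r unfolding in_S_r_def by simp

lemma solution: "is_solution d r x n n"
  using smallest unfolding is_smallest_solution_def by simp

lemma descent_walk_diag: "i \<in> {1..d} \<Longrightarrow> descent_walk (x i i) (n i)"
  using in_S_zero[OF in_S] in_S_diag_step[OF in_S] smallest_solution_diag_above_end[OF in_S smallest]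
  by unfold_locales auto

lemma tau_eq_ladder: "i \<in> {1..d} \<Longrightarrow> tau x i = descent_walk.ladder (x i i)"
  using descent_walk.ladder_def[OF descent_walk_diag] unfolding tau_def by auto

lemma bar_seq_eq: "i \<in> {1..d} \<Longrightarrow> bar_seq x i j = (\<lambda>k. x i j (descent_walk.ladder (x i i) k))"
  unfolding bar_seq_def by (simp add: tau_eq_ladder)

lemma bar_len_eq_depth: "i \<in> {1..d} \<Longrightarrow> bar_len x n i = descent_walk.depth (x i i) (n i)"
  using descent_walk.Min_image_eq_end[OF descent_walk_diag] descent_walk.depth_def[OF descent_walk_diag]
  unfolding bar_len_def by simp

lemma shifted_walk_diag: "i \<in> {1..d} \<Longrightarrow> p < bar_len x n i \<Longrightarrow> shifted_walk (x i i) (n i) p"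
  using descent_walk_diag bar_len_eq_depth by (simp add: shifted_walk_def shifted_walk_axioms_def)

lemma in_S_bar: "in_S d (bar_seq x) (bar_len x n)"
  unfolding in_S_def
proof (intro conjI ballI allI impI)
  fix i j assume i: "i \<in> {1..d}" and j: "j \<in> {1..d}"
  interpret descent_walk "x i i" "n i" by (rule descent_walk_diag[OF i])
  show "bar_seq x i j 0 = 0" using bar_seq_eq[OF i] ladder_0 in_S_zero[OF in_S i j] by simp
next
  fix i j k assume i: "i \<in> {1..d}" and j: "j \<in> {1..d}" and "i \<noteq> j" and k: "k < bar_len x n i"
  interpret descent_walk "x i i" "n i" by (rule descent_walk_diag[OF i])
  have "ladder k \<le> ladder (Suc k)" "ladder (Suc k) \<le> n i"
    using ladder_mono[of k "Suc k"] ladder_le[of "Suc k"] k bar_len_eq_depth[OF i] by simp_all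
  then show "bar_seq x i j k \<le> bar_seq x i j (Suc k)"
    using bar_seq_eq[OF i] in_S_offdiag_mono[OF in_S i j \<open>i \<noteq> j\<close>] by simp
next
  fix i k assume i: "i \<in> {1..d}" and k: "k < bar_len x n i"
  interpret descent_walk "x i i" "n i" by (rule descent_walk_diag[OF i])
  show "-1 \<le> bar_seq x i i (Suc k) - bar_seq x i i k"
    using bar_seq_eq[OF i] f_ladder[of k] f_ladder[of "Suc k"] k bar_len_eq_depth[OF i] by simp
qed

lemma solution_bar: "is_solution d r (bar_seq x) (bar_len x n) (bar_len x n)"
proof -
  have "bar_seq x i j (bar_len x n i) = x i j (n i)" if i: "i \<in> {1..d}" for i j
  proof -
    interpret descent_walk "x i i" "n i" by (rule descent_walk_diag[OF i])
    show ?thesis using bar_seq_eq[OF i] bar_len_eq_depth[OF i] ladder_depth by simp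
  qed
  then show ?thesis using solution unfolding is_solution_def by simp
qed

abbreviation bar_shifts :: "(nat \<Rightarrow> nat) set" where
  "bar_shifts \<equiv> PiE {1..d} (\<lambda>i. {0..<bar_len x n i})"

text \<open>Restricted to \<open>{1..d}\<close> so that it lands in the extensional function space counted
  by \<open>num_good\<close>.\<close>
definition lift_shift :: "(nat \<Rightarrow> nat) \<Rightarrow> nat \<Rightarrow> nat" where
  "lift_shift p = restrict (\<lambda>i. tau x i (p i)) {1..d}"

lemma lift_shift_eq_shift:
  "i \<in> {1..d} \<Longrightarrow> p i < bar_len x n i \<Longrightarrow> lift_shift p i = shifted_walk.shift (x i i) (p i)"
  unfolding lift_shift_def shifted_walk.shift_def[OF shifted_walk_diag] by (simp add: tau_eq_ladder)

lemma lift_shift_less: "i \<in> {1..d} \<Longrightarrow> p i < bar_len x n i \<Longrightarrow> lift_shift p i < n i"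
  using shifted_walk.shift_less[OF shifted_walk_diag] lift_shift_eq_shift by metis

lemma lift_shift_le:
  "p \<in> bar_shifts \<Longrightarrow> \<forall>i\<in>{1..d}. lift_shift p i \<le> n i"
  using lift_shift_less PiE_mem by (metis atLeastLessThan_iff less_imp_le)

lemma lift_shift_PiE:
  "p \<in> bar_shifts \<Longrightarrow> lift_shift p \<in> PiE {1..d} (\<lambda>i. {0..<n i})"
  using lift_shift_less unfolding lift_shift_def by (auto simp: PiE_iff)

lemma cyc_perm_bar_eq:
  assumes i: "i \<in> {1..d}" and p: "p i < bar_len x n i" and k: "k \<le> bar_len x n i"
  shows "cyc_perm (bar_seq x) p (bar_len x n) i j k
       = cyc_perm x (lift_shift p) n i j (shifted_walk.shifted_ladder (x i i) (n i) (p i) k)"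
proof -
  interpret shifted_walk "x i i" "n i" "p i" by (rule shifted_walk_diag[OF i p])
  show ?thesis
    unfolding cyc_perm_def lift_shift_eq_shift[of i p, OF i p] bar_seq_eq[OF i] bar_len_eq_depth[OF i]
    using cyc_shifted_ladder k bar_len_eq_depth[OF i] by simp
qed

lemma cyc_perm_bar_below:
  assumes p: "p \<in> bar_shifts" and i: "i \<in> {1..d}" and h: "h \<le> n i"
  shows "\<exists>k\<le>bar_len x n i. shifted_walk.shifted_ladder (x i i) (n i) (p i) k \<le> h \<and>
    (\<forall>j\<in>{1..d}. cyc_perm (bar_seq x) p (bar_len x n) i j k \<le> cyc_perm x (lift_shift p) n i j h)"
proof -
  have pi: "p i < bar_len x n i" using p i by auto
  interpret shifted_walk "x i i" "n i" "p i" by (rule shifted_walk_diag[OF i pi])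
  obtain k where k: "k \<le> depth" "shifted_ladder k \<le> h" "- int k \<le> cyc (x i i) shift (n i) h"
    using shifted_ladder_below[OF h] by blast
  have S: "in_S d (cyc_perm x (lift_shift p) n) n"
    using in_S_cyc_perm[OF in_S lift_shift_le[OF p]] .
  have "cyc_perm (bar_seq x) p (bar_len x n) i j k \<le> cyc_perm x (lift_shift p) n i j h"
    if j: "j \<in> {1..d}" for j
  proof (cases "i = j")
    case True
    then show ?thesis
      using cyc_perm_bar_eq[of i p, OF i pi] cyc_at_shifted_ladder k bar_len_eq_depth[OF i]
      unfolding cyc_perm_def lift_shift_eq_shift[of i p, OF i pi] by simp
  next
    case False
    then show ?thesis
      using cyc_perm_bar_eq[of i p, OF i pi] in_S_offdiag_mono[OF S i j False] k h bar_len_eq_depth[OF i]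
      by simp
  qed
  then show ?thesis using k bar_len_eq_depth[OF i] by auto
qed

text \<open>A solution \<open>s\<close> of the shifted \<open>x\<close> dominates, entry by entry, some \<open>t\<close> for the
  shifted \<open>x\<close> bar. The greedy solution below \<open>t\<close> is at least \<open>bar_len\<close> by goodness, so
  \<open>t = bar_len\<close>, whose shifted ladder time is \<open>n\<close>.\<close>
lemma smallest_solution_cyc_perm_lift_shift:
  assumes p: "p \<in> bar_shifts"
    and good: "is_smallest_solution d r (cyc_perm (bar_seq x) p (bar_len x n)) (bar_len x n) (bar_len x n)"
  shows "is_smallest_solution d r (cyc_perm x (lift_shift p) n) n n"
  unfolding is_smallest_solution_def
proof (intro conjI allI impI ballI)
  show "is_solution d r (cyc_perm x (lift_shift p) n) n n"
    by (rule is_solution_cyc_perm[OF in_S lift_shift_le[OF p] solution])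
  fix s i0
  assume s: "is_solution d r (cyc_perm x (lift_shift p) n) n s" and i0: "i0 \<in> {1..d}"
  have "\<forall>i\<in>{1..d}. \<exists>k\<le>bar_len x n i. shifted_walk.shifted_ladder (x i i) (n i) (p i) k \<le> s i \<and>
    (\<forall>j\<in>{1..d}. cyc_perm (bar_seq x) p (bar_len x n) i j k \<le> cyc_perm x (lift_shift p) n i j (s i))"
    using cyc_perm_bar_below[OF p] s unfolding is_solution_def by blast
  then obtain t where t: "\<forall>i\<in>{1..d}. t i \<le> bar_len x n i \<and>
      shifted_walk.shifted_ladder (x i i) (n i) (p i) (t i) \<le> s i \<and>
      (\<forall>j\<in>{1..d}. cyc_perm (bar_seq x) p (bar_len x n) i j (t i) \<le> cyc_perm x (lift_shift p) n i j (s i))"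
    by metis
  have "residual d r (cyc_perm (bar_seq x) p (bar_len x n)) t j
      \<le> residual d r (cyc_perm x (lift_shift p) n) s j" if "j \<in> {1..d}" for j
    unfolding residual_def using t that by (intro add_left_mono sum_mono) blast
  then have "\<forall>j\<in>{1..d}. residual d r (cyc_perm (bar_seq x) p (bar_len x n)) t j \<le> 0"
    using s unfolding is_solution_iff by force
  moreover have "\<forall>i\<in>{1..d}. p i \<le> bar_len x n i"
    using PiE_mem[OF p] by (meson atLeastLessThan_iff less_imp_le)
  then have S: "in_S d (cyc_perm (bar_seq x) p (bar_len x n)) (bar_len x n)"
    by (rule in_S_cyc_perm[OF in_S_bar])
  ultimately obtain u where "is_solution d r (cyc_perm (bar_seq x) p (bar_len x n)) (bar_len x n) u"
    "\<forall>i\<in>{1..d}. u i \<le> t i"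
    using solution_below[OF S] t by blast
  then have "t i0 = bar_len x n i0"
    using good t i0 unfolding is_smallest_solution_def by (meson order_antisym order_trans)
  moreover have "p i0 < bar_len x n i0" using p i0 by auto
  ultimately show "n i0 \<le> s i0"
    using t i0 shifted_walk.shifted_ladder_depth[OF shifted_walk_diag] bar_len_eq_depth by metis
qed

lemma smallest_solution_cyc_perm_bar:
  assumes p: "p \<in> bar_shifts"
    and good: "is_smallest_solution d r (cyc_perm x (lift_shift p) n) n n"
  shows "is_smallest_solution d r (cyc_perm (bar_seq x) p (bar_len x n)) (bar_len x n) (bar_len x n)"
  unfolding is_smallest_solution_def
proof (intro conjI allI impI ballI)
  have pi: "\<forall>i\<in>{1..d}. p i < bar_len x n i" using p by auto
  then show "is_solution d r (cyc_perm (bar_seq x) p (bar_len x n)) (bar_len x n) (bar_len x n)"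
    using is_solution_cyc_perm[OF in_S_bar _ solution_bar] by (simp add: less_imp_le)
  fix u i0
  assume u: "is_solution d r (cyc_perm (bar_seq x) p (bar_len x n)) (bar_len x n) u"
    and i0: "i0 \<in> {1..d}"
  define s where "s i = shifted_walk.shifted_ladder (x i i) (n i) (p i) (u i)" for i
  have u_le: "\<forall>i\<in>{1..d}. u i \<le> bar_len x n i" using u unfolding is_solution_def by blast
  have "\<forall>i\<in>{1..d}. s i \<le> n i"
    using shifted_walk.shifted_ladder_le[OF shifted_walk_diag] pi u_le bar_len_eq_depth
    unfolding s_def by metis
  moreover have "residual d r (cyc_perm x (lift_shift p) n) s j
      = residual d r (cyc_perm (bar_seq x) p (bar_len x n)) u j" for j
    unfolding residual_def s_def using cyc_perm_bar_eq pi u_le by (intro arg_cong2[where f = "(+)"] sum.cong) simp_all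
  ultimately have "is_solution d r (cyc_perm x (lift_shift p) n) n s"
    using u unfolding is_solution_iff by simp
  then have "n i0 \<le> s i0" using good i0 unfolding is_smallest_solution_def by blast
  then show "bar_len x n i0 \<le> u i0"
    using shifted_walk.shifted_ladder_less[OF shifted_walk_diag] pi i0 bar_len_eq_depth
    unfolding s_def by (metis leD not_le_imp_less)
qed

lemma good_shift_new_minimum:
  assumes c: "\<forall>i\<in>{1..d}. c i < n i" and good: "is_smallest_solution d r (cyc_perm x c n) n n"
    and i: "i \<in> {1..d}" and h: "h < c i"
  shows "x i i (c i) < x i i h"
proof -
  have S: "in_S d (cyc_perm x c n) n" using in_S_cyc_perm[OF in_S] c by (simp add: less_imp_le)
  have ci: "c i < n i" using c i by blast
  then have "n i - c i + h < n i" using h by simp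
  from smallest_solution_diag_above_end[OF S good i this]
  have "cyc (x i i) (c i) (n i) (n i) < cyc (x i i) (c i) (n i) (n i - c i + h)"
    unfolding cyc_perm_def .
  moreover have "cyc (x i i) (c i) (n i) (n i) = x i i (n i)"
    using cyc_end in_S_zero[OF in_S i i] c i by (simp add: less_imp_le)
  moreover have "cyc (x i i) (c i) (n i) (n i - c i + h) = x i i h + x i i (n i) - x i i (c i)"
    using ci h in_S_zero[OF in_S i i] unfolding cyc_def by (cases "h = 0") auto
  ultimately show ?thesis by simp
qed

lemma good_shift_eq_tau:
  assumes c: "\<forall>i\<in>{1..d}. c i < n i" and good: "is_smallest_solution d r (cyc_perm x c n) n n"
    and i: "i \<in> {1..d}"
  shows "\<exists>k<bar_len x n i. tau x i k = c i"
proof -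
  interpret descent_walk "x i i" "n i" by (rule descent_walk_diag[OF i])
  have new_min: "\<forall>h<c i. x i i (c i) < x i i h" using good_shift_new_minimum[OF c good i] by blast
  then have nonpos: "x i i (c i) \<le> 0" using f_0 by (cases "c i") auto
  then have level: "x i i (c i) = - int (nat (- x i i (c i)))" by simp
  have "x i i (n i) < x i i (c i)" using above_end c i by blast
  then have "nat (- x i i (c i)) < depth" using f_end nonpos by (simp add: nat_less_iff)
  moreover have "tau x i (nat (- x i i (c i))) = c i"
    using ladder_eqI[OF level new_min] tau_eq_ladder[OF i] by simp
  ultimately show ?thesis using bar_len_eq_depth[OF i] by auto
qed

lemma good_shift_in_lift_shift_image:
  assumes c: "c \<in> PiE {1..d} (\<lambda>i. {0..<n i})" and good: "is_smallest_solution d r (cyc_perm x c n) n n"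
  shows "c \<in> lift_shift ` bar_shifts"
proof -
  have "\<forall>i\<in>{1..d}. c i < n i" using c by auto
  then obtain k where k: "\<forall>i\<in>{1..d}. k i < bar_len x n i \<and> tau x i (k i) = c i"
    using good_shift_eq_tau[OF _ good] by metis
  have "restrict k {1..d} \<in> bar_shifts" using k by auto
  moreover have "c = lift_shift (restrict k {1..d})"
    using k c unfolding lift_shift_def by (intro extensionalityI[of _ "{1..d}"]) (auto simp: PiE_iff)
  ultimately show ?thesis by blast
qed

lemma inj_on_lift_shift: "inj_on lift_shift bar_shifts"
proof (rule inj_onI, rule extensionalityI[of _ "{1..d}"])
  fix p p' i
  assume p: "p \<in> bar_shifts" and p': "p' \<in> bar_shifts"
    and eq: "lift_shift p = lift_shift p'" and i: "i \<in> {1..d}"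
  interpret descent_walk "x i i" "n i" by (rule descent_walk_diag[OF i])
  have "ladder (p i) = ladder (p' i)" using fun_cong[OF eq, of i] i tau_eq_ladder[OF i]
    unfolding lift_shift_def by simp
  moreover have "p i < depth" "p' i < depth"
    using PiE_mem[OF p i] PiE_mem[OF p' i] bar_len_eq_depth[OF i] by auto
  ultimately show "p i = p' i" using ladder_strict_mono by (metis less_imp_le nat_neq_iff)
qed (use PiE_iff in blast)+

lemma bij_betw_lift_shift:
  "bij_betw lift_shift
     {p \<in> bar_shifts.
        is_smallest_solution d r (cyc_perm (bar_seq x) p (bar_len x n)) (bar_len x n) (bar_len x n)}
     {c \<in> PiE {1..d} (\<lambda>i. {0..<n i}). is_smallest_solution d r (cyc_perm x c n) n n}"
  (is "bij_betw _ ?B ?G")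
  unfolding bij_betw_def
proof
  show "inj_on lift_shift ?B" using inj_on_lift_shift by (rule inj_on_subset) blast
  show "lift_shift ` ?B = ?G"
  proof
    show "lift_shift ` ?B \<subseteq> ?G" using lift_shift_PiE smallest_solution_cyc_perm_lift_shift by blast
    show "?G \<subseteq> lift_shift ` ?B"
    proof
      fix c assume c: "c \<in> ?G"
      then obtain p where p: "p \<in> bar_shifts" "c = lift_shift p"
        using good_shift_in_lift_shift_image by blast
      then have "p \<in> ?B" using c smallest_solution_cyc_perm_bar by blast
      then show "c \<in> lift_shift ` ?B" using p by blast
    qed
  qed
qed

end

theorem lemma4p7:
  fixes d :: nat and r :: "nat \<Rightarrow> nat" and x :: "nat \<Rightarrow> nat \<Rightarrow> nat \<Rightarrow> int" and n :: "nat \<Rightarrow> nat"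
  assumes "d \<ge> 2"
    and "\<exists>j\<in>{1..d}. r j \<noteq> 0"
    and "in_S_r d r x n"
  shows "num_good d r x n = num_good d r (bar_seq x) (bar_len x n)"
proof -
  interpret S_r_family d r x n by (rule S_r_family.intro) (rule assms(3))
  show ?thesis
    unfolding num_good_def using bij_betw_same_card[OF bij_betw_lift_shift] by simp
qed

end
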